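(* Let $m\ge 2$ be an integer, let $P_n^k\in\mathbb{R}^{m}$ be any fixed vector (linearization point), and let $i\in\{1,\dots,m\}$. For $P_n\in\mathbb{R}^m$ define the softmax component $R_{n,i}(P_n)=\exp(P_{n,i})/\sum_{j=1}^{m}\exp(P_{n,j})$ and $\mathrm{LSE}(P_n)=\ln\bigl(\sum_{j=1}^{m}\exp(P_{n,j})\bigr)$, and let $g^k=\exp(P_n^k)/\sum_{j=1}^m\exp(P^k_{n,j})\in\mathbb{R}^m$ (componentwise exponential). Define $$\overline{R}_{n,i}(P_n)=\exp\Bigl\{P_{n,i}-\mathrm{LSE}(P_n^k)-(g^k)^{\top}(P_n-P_n^k)\Bigr\},$$ $$\underline{R}_{n,i}(P_n)=1-\sum_{j\in\{1,\dots,m\}\setminus\{i\}}\exp(P_{n,j})\exp\Bigl\{-\mathrm{LSE}(P_n^k)-(g^k)^{\top}(P_n-P_n^k)\Bigr\}.$$ Let $\underline{r}_{n,i},\overline{r}_{n,i}\in\mathbb{R}$. Then the constraints $$\underline{r}_{n,i}\le \underline{R}_{n,i}(P_n),\qquad \overline{R}_{n,i}(P_n)\le \overline{r}_{n,i}$$ define a convex set of $P_n\in\mathbb{R}^m$; they are sufficient for $\underline{r}_{n,i}\le R_{n,i}(P_n)\le \overline{r}_{n,i}$; and they are necessary for $\underline{r}_{n,i}\le R_{n,i}(P_n^k)\le \overline{r}_{n,i}$, in the sense that if $\underline{r}_{n,i}\le R_{n,i}(P_n^k)\le \overline{r}_{n,i}$ then the constraints hold at $P_n=P_n^k$.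
   Context: Here $P_n$ is the $n$th row of a matrix $P\in\mathbb{R}^{m\times m}$ to which softmax is applied row-wise (in the paper $m=w+p$), and $P_n^k$ is the $n$th row of a linearization point $P^k$. *)

theory Defs
  imports "HOL-Analysis.Analysis"
begin

definition softmax_comp :: "real^'m \<Rightarrow> 'm \<Rightarrow> real" where
  "softmax_comp P i = exp (P $ i) / (\<Sum>j\<in>UNIV. exp (P $ j))"

definition LSE :: "real^'m \<Rightarrow> real" where
  "LSE P = ln (\<Sum>j\<in>UNIV. exp (P $ j))"

definition softmax_vec :: "real^'m \<Rightarrow> real^'m" where
  "softmax_vec Pk = (\<chi> j. exp (Pk $ j) / (\<Sum>l\<in>UNIV. exp (Pk $ l)))"

definition R_upper :: "real^'m \<Rightarrow> 'm \<Rightarrow> real^'m \<Rightarrow> real" where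
  "R_upper Pk i P = exp (P $ i - LSE Pk - softmax_vec Pk \<bullet> (P - Pk))"

definition R_lower :: "real^'m \<Rightarrow> 'm \<Rightarrow> real^'m \<Rightarrow> real" where
  "R_lower Pk i P = 1 - (\<Sum>j\<in>UNIV - {i}. exp (P $ j) * exp (- LSE Pk - softmax_vec Pk \<bullet> (P - Pk)))"

end

theory Submission
  imports Defs
begin

text \<open>
  Writing \<open>softmax_i(P) = exp (P\<^sub>i - LSE P) = 1 - \<Sum>\<^sub>j\<^sub>\<noteq>\<^sub>i exp (P\<^sub>j - LSE P)\<close>, both bounds
  arise by replacing \<open>LSE P\<close> with its tangent at \<open>P\<^sup>k\<close>, whose slope is the softmax vector
  \<open>g\<^sup>k\<close>. By Jensen's inequality for \<open>exp\<close> with weights \<open>g\<^sup>k\<close>, this tangent lies below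
  \<open>LSE\<close>, so the replacement can only enlarge the first expression and shrink the second,
  and it is exact at \<open>P = P\<^sup>k\<close>. After the replacement every exponent is affine in \<open>P\<close>, so
  the upper bound is convex and the lower bound concave in \<open>P\<close>, and the constraints cut
  out a sublevel set intersected with a superlevel set.
\<close>

lemma convex_on_compose_affine:
  assumes "convex_on UNIV f" and "linear l"
  shows "convex_on UNIV (\<lambda>x. f (l x + b))"
proof (rule convex_onI)
  fix t :: real and x y
  assume "0 < t" "t < 1"
  have "l ((1 - t) *\<^sub>R x + t *\<^sub>R y) = (1 - t) *\<^sub>R l x + t *\<^sub>R l y"
    using \<open>linear l\<close> by (simp add: linear_add linear_scale)
  then have "l ((1 - t) *\<^sub>R x + t *\<^sub>R y) + b = (1 - t) *\<^sub>R (l x + b) + t *\<^sub>R (l y + b)"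
    by (simp add: algebra_simps)
  then show "f (l ((1 - t) *\<^sub>R x + t *\<^sub>R y) + b) \<le> (1 - t) * f (l x + b) + t * f (l y + b)"
    using convex_onD[OF assms(1), of t] \<open>0 < t\<close> \<open>t < 1\<close> by simp
qed simp

lemma convex_on_sum_fun:
  assumes "finite I" and "convex S" and "\<And>i. i \<in> I \<Longrightarrow> convex_on S (f i)"
  shows "convex_on S (\<lambda>x. \<Sum>i\<in>I. f i x)"
  using assms by (induction I rule: finite_induct) (auto simp: convex_on_const)

lemma convex_sublevel_set:
  assumes "convex_on S f"
  shows "convex {x \<in> S. f x \<le> c}"
proof -
  have "f (u *\<^sub>R x + v *\<^sub>R y) \<le> c"
    if "x \<in> S" "y \<in> S" "f x \<le> c" "f y \<le> c" "0 \<le> u" "0 \<le> v" "u + v = 1" for x y u v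
    using convex_lower[OF assms that(1,2,5-7)] that(3,4) by simp
  then show ?thesis
    using convex_on_imp_convex[OF assms] by (auto simp: convex_def)
qed

lemma convex_superlevel_set:
  assumes "concave_on S f"
  shows "convex {x \<in> S. c \<le> f x}"
  using convex_sublevel_set[of S "\<lambda>x. - f x" "- c"] assms by (simp add: concave_on_def)

text \<open>\<open>softmax_vec Pk\<close> is the gradient of \<open>LSE\<close> at \<open>Pk\<close>.\<close>

definition LSE_tangent :: "real^'m \<Rightarrow> real^'m \<Rightarrow> real" where
  "LSE_tangent Pk P = LSE Pk + softmax_vec Pk \<bullet> (P - Pk)"

lemma LSE_tangent_self [simp]: "LSE_tangent Pk Pk = LSE Pk"
  by (simp add: LSE_tangent_def)

lemma sum_exp_pos:
  fixes P :: "real^'m"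
  shows "0 < (\<Sum>j\<in>UNIV. exp (P $ j))"
  by (intro sum_pos) auto

lemma exp_LSE: "exp (LSE P) = (\<Sum>j\<in>UNIV. exp (P $ j))"
  using sum_exp_pos by (simp add: LSE_def)

lemma softmax_comp_eq_exp: "softmax_comp P i = exp (P $ i - LSE P)"
  by (simp add: softmax_comp_def exp_diff exp_LSE)

lemma softmax_comp_pos: "0 < softmax_comp P i"
  by (simp add: softmax_comp_eq_exp)

lemma softmax_vec_nth: "softmax_vec P $ j = softmax_comp P j"
  by (simp add: softmax_vec_def softmax_comp_def)

lemma sum_softmax_comp: "(\<Sum>j\<in>UNIV. softmax_comp P j) = 1"
  using sum_exp_pos[of P] by (simp add: softmax_comp_def flip: sum_divide_distrib)

lemma softmax_comp_eq_1_minus: "softmax_comp P i = 1 - (\<Sum>j\<in>UNIV - {i}. exp (P $ j - LSE P))"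
  using sum_softmax_comp[of P] by (simp add: sum.remove[of UNIV i] softmax_comp_eq_exp)

lemma R_upper_eq: "R_upper Pk i P = exp (P $ i - LSE_tangent Pk P)"
  by (simp add: R_upper_def LSE_tangent_def)

lemma R_lower_eq: "R_lower Pk i P = 1 - (\<Sum>j\<in>UNIV - {i}. exp (P $ j - LSE_tangent Pk P))"
  by (simp add: R_lower_def LSE_tangent_def mult_exp_exp algebra_simps)

lemma LSE_tangent_le_LSE: "LSE_tangent Pk P \<le> LSE P"
proof -
  let ?g = "softmax_vec Pk"
  have "exp (?g \<bullet> (P - Pk)) = exp (\<Sum>j\<in>UNIV. ?g $ j *\<^sub>R (P - Pk) $ j)"
    by (simp add: inner_vec_def)
  also have "\<dots> \<le> (\<Sum>j\<in>UNIV. ?g $ j * exp ((P - Pk) $ j))"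
    using convex_on_sum[OF _ _ exp_convex, where S = UNIV and a = "\<lambda>j. ?g $ j" and y = "\<lambda>j. (P - Pk) $ j"]
    by (simp add: softmax_vec_nth sum_softmax_comp less_imp_le[OF softmax_comp_pos])
  also have "\<dots> = (\<Sum>j\<in>UNIV. exp (P $ j)) / exp (LSE Pk)"
    by (simp add: softmax_vec_nth softmax_comp_eq_exp exp_diff sum_divide_distrib)
  also have "\<dots> = exp (LSE P - LSE Pk)"
    by (simp add: exp_diff exp_LSE)
  finally show ?thesis
    by (simp add: LSE_tangent_def)
qed

lemma softmax_comp_le_R_upper: "softmax_comp P i \<le> R_upper Pk i P"
  using LSE_tangent_le_LSE by (simp add: softmax_comp_eq_exp R_upper_eq)

lemma R_lower_le_softmax_comp: "R_lower Pk i P \<le> softmax_comp P i"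
  using LSE_tangent_le_LSE[of Pk P] by (auto simp: softmax_comp_eq_1_minus R_lower_eq intro!: sum_mono)

lemma R_upper_self: "R_upper Pk i Pk = softmax_comp Pk i"
  by (simp add: softmax_comp_eq_exp R_upper_eq)

lemma R_lower_self: "R_lower Pk i Pk = softmax_comp Pk i"
  by (simp add: softmax_comp_eq_1_minus R_lower_eq)

lemma convex_on_exp_minus_LSE_tangent: "convex_on UNIV (\<lambda>P. exp (P $ j - LSE_tangent Pk P))"
proof -
  have "linear (\<lambda>P. P $ j - softmax_vec Pk \<bullet> P)"
    by (intro linear_compose_sub bounded_linear.linear bounded_linear_vec_nth bounded_linear_inner_right)
  then have "convex_on UNIV (\<lambda>P. exp ((P $ j - softmax_vec Pk \<bullet> P) + (softmax_vec Pk \<bullet> Pk - LSE Pk)))"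
    by (rule convex_on_compose_affine[OF exp_convex])
  then show ?thesis
    by (simp add: LSE_tangent_def inner_diff_right algebra_simps)
qed

lemma convex_on_R_upper: "convex_on UNIV (R_upper Pk i)"
  using convex_on_exp_minus_LSE_tangent by (simp add: R_upper_eq[abs_def])

lemma concave_on_R_lower: "concave_on UNIV (R_lower Pk i)"
proof -
  have "convex_on UNIV (\<lambda>P. \<Sum>j\<in>UNIV - {i}. exp (P $ j - LSE_tangent Pk P))"
    by (intro convex_on_sum_fun convex_on_exp_minus_LSE_tangent) auto
  then have "convex_on UNIV (\<lambda>P. (\<Sum>j\<in>UNIV - {i}. exp (P $ j - LSE_tangent Pk P)) + - 1)"
    by (rule convex_on_add) (simp add: convex_on_const)
  then show ?thesis
    by (simp add: R_lower_eq[abs_def] concave_on_def)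
qed

theorem theorem2:
  fixes Pk :: "real^'m" and i :: 'm and r_lo r_up :: real
  assumes "CARD('m) \<ge> 2"
  shows "convex {P :: real^'m. r_lo \<le> R_lower Pk i P \<and> R_upper Pk i P \<le> r_up}
    \<and> (\<forall>P :: real^'m. r_lo \<le> R_lower Pk i P \<and> R_upper Pk i P \<le> r_up
          \<longrightarrow> r_lo \<le> softmax_comp P i \<and> softmax_comp P i \<le> r_up)
    \<and> (r_lo \<le> softmax_comp Pk i \<and> softmax_comp Pk i \<le> r_up
          \<longrightarrow> r_lo \<le> R_lower Pk i Pk \<and> R_upper Pk i Pk \<le> r_up)"
proof (intro conjI allI impI)
  have "convex ({P \<in> UNIV. r_lo \<le> R_lower Pk i P} \<inter> {P \<in> UNIV. R_upper Pk i P \<le> r_up})"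
    by (intro convex_Int convex_superlevel_set convex_sublevel_set concave_on_R_lower convex_on_R_upper)
  then show "convex {P. r_lo \<le> R_lower Pk i P \<and> R_upper Pk i P \<le> r_up}"
    by (simp add: Collect_conj_eq)
next
  fix P
  assume "r_lo \<le> R_lower Pk i P \<and> R_upper Pk i P \<le> r_up"
  then show "r_lo \<le> softmax_comp P i" "softmax_comp P i \<le> r_up"
    using R_lower_le_softmax_comp[of Pk i P] softmax_comp_le_R_upper[of P i Pk] by linarith+
next
  assume "r_lo \<le> softmax_comp Pk i \<and> softmax_comp Pk i \<le> r_up"
  then show "r_lo \<le> R_lower Pk i Pk" "R_upper Pk i Pk \<le> r_up"
    by (simp_all add: R_lower_self R_upper_self)
qed

end
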